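(* There exist infinitely many EPS-graphs.
   Context: All graphs are finite and simple. $\mathcal{C}$ is the family of complete graphs; $\iota(J)$ is the family of graphs isomorphic to induced subgraphs of $J$; $\mathcal{F}_1\vee\mathcal{F}_2$ (resp. $\mathcal{F}_1\wedge\mathcal{F}_2$) is the family of disjoint unions (resp. joins) of a graph in $\mathcal{F}_1$ and a graph in $\mathcal{F}_2$; $S_2$ is the edgeless graph on $2$ vertices, $K_2$ an edge. $\mathcal{C}^+$ is the family of graphs $G$ that are complete or such that $G\setminus v$ is complete for some $v\in V(G)$ with $\deg(v)\le1$. For a positive integer $l$, a graph $H$ is an $l$-EPS-graph if: (EPS1) for every $1\le s\le l$, $V(H)$ can be partitioned into $s$ stable sets and $l-s$ cliques; (EPS2) for each $\mathcal{G}\in\{\iota(S_2)\vee\mathcal{C},\iota(K_2)\vee\mathcal{C},\iota(S_2)\wedge\mathcal{C},\mathcal{C}^+\}$, $V(H)$ can be partitioned into $l-1$ cliques and a set inducing a graph in $\mathcal{G}$; (EPS3) there is no partition $(X_1,\dots,X_l)$ of $V(H)$ such that $H[X_1]$ is a clique or the complement of a star $K_{1,m}$, and $X_i$ is a clique for $2\le i\le l$. An EPS-graph is an $l$-EPS-graph for some positive integer $l$. *)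

theory Defs
  imports Main
begin

type_synonym 'a graph = "'a set \<times> ('a \<Rightarrow> 'a \<Rightarrow> bool)"

definition verts :: "'a graph \<Rightarrow> 'a set" where "verts G = fst G"
definition adj :: "'a graph \<Rightarrow> 'a \<Rightarrow> 'a \<Rightarrow> bool" where "adj G = snd G"

definition wf_graph :: "'a graph \<Rightarrow> bool" where
  "wf_graph G \<longleftrightarrow> finite (verts G) \<and>
     (\<forall>x y. adj G x y \<longrightarrow> x \<in> verts G \<and> y \<in> verts G \<and> x \<noteq> y \<and> adj G y x)"

definition induced :: "'a graph \<Rightarrow> 'a set \<Rightarrow> 'a graph" where
  "induced G X = (X \<inter> verts G, \<lambda>x y. x \<in> X \<and> y \<in> X \<and> adj G x y)"

definition graph_iso :: "'a graph \<Rightarrow> 'b graph \<Rightarrow> bool" where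
  "graph_iso G H \<longleftrightarrow> (\<exists>f. bij_betw f (verts G) (verts H) \<and>
     (\<forall>x\<in>verts G. \<forall>y\<in>verts G. adj G x y \<longleftrightarrow> adj H (f x) (f y)))"

definition complete_fam :: "'a graph \<Rightarrow> bool" where
  "complete_fam G \<longleftrightarrow> (\<forall>x\<in>verts G. \<forall>y\<in>verts G. x \<noteq> y \<longrightarrow> adj G x y)"

definition iota :: "'b graph \<Rightarrow> 'a graph \<Rightarrow> bool" where
  "iota J G \<longleftrightarrow> (\<exists>Y \<subseteq> verts J. graph_iso G (induced J Y))"

definition disj_union_fam :: "('a graph \<Rightarrow> bool) \<Rightarrow> ('a graph \<Rightarrow> bool) \<Rightarrow> 'a graph \<Rightarrow> bool" where
  "disj_union_fam F1 F2 G \<longleftrightarrow> (\<exists>A B. A \<union> B = verts G \<and> A \<inter> B = {} \<and>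
     (\<forall>a\<in>A. \<forall>b\<in>B. \<not> adj G a b) \<and> F1 (induced G A) \<and> F2 (induced G B))"

definition join_fam :: "('a graph \<Rightarrow> bool) \<Rightarrow> ('a graph \<Rightarrow> bool) \<Rightarrow> 'a graph \<Rightarrow> bool" where
  "join_fam F1 F2 G \<longleftrightarrow> (\<exists>A B. A \<union> B = verts G \<and> A \<inter> B = {} \<and>
     (\<forall>a\<in>A. \<forall>b\<in>B. adj G a b) \<and> F1 (induced G A) \<and> F2 (induced G B))"

definition S2 :: "bool graph" where "S2 = (UNIV, \<lambda>x y. False)"
definition K2 :: "bool graph" where "K2 = (UNIV, \<lambda>x y. x \<noteq> y)"

definition degree_in :: "'a graph \<Rightarrow> 'a \<Rightarrow> nat" where
  "degree_in G v = card {u \<in> verts G. adj G v u}"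

definition Cplus_fam :: "'a graph \<Rightarrow> bool" where
  "Cplus_fam G \<longleftrightarrow> complete_fam G \<or>
     (\<exists>v\<in>verts G. complete_fam (induced G (verts G - {v})) \<and> degree_in G v \<le> 1)"

definition star :: "nat \<Rightarrow> nat graph" where
  "star m = ({0..m}, \<lambda>x y. x \<in> {0..m} \<and> y \<in> {0..m} \<and> x \<noteq> y \<and> (x = 0 \<or> y = 0))"

definition complement :: "'a graph \<Rightarrow> 'a graph" where
  "complement G = (verts G, \<lambda>x y. x \<in> verts G \<and> y \<in> verts G \<and> x \<noteq> y \<and> \<not> adj G x y)"

definition is_clique :: "'a graph \<Rightarrow> 'a set \<Rightarrow> bool" where
  "is_clique G X \<longleftrightarrow> X \<subseteq> verts G \<and> (\<forall>x\<in>X. \<forall>y\<in>X. x \<noteq> y \<longrightarrow> adj G x y)"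

definition is_stable :: "'a graph \<Rightarrow> 'a set \<Rightarrow> bool" where
  "is_stable G X \<longleftrightarrow> X \<subseteq> verts G \<and> (\<forall>x\<in>X. \<forall>y\<in>X. \<not> adj G x y)"

(* P 0, ..., P (l-1) is a partition of V(G) (parts may be empty) *)
definition is_partition :: "'a graph \<Rightarrow> nat \<Rightarrow> (nat \<Rightarrow> 'a set) \<Rightarrow> bool" where
  "is_partition G l P \<longleftrightarrow> (\<Union>i<l. P i) = verts G \<and>
     (\<forall>i<l. \<forall>j<l. i \<noteq> j \<longrightarrow> P i \<inter> P j = {})"

definition cliques_plus :: "'a graph \<Rightarrow> nat \<Rightarrow> ('a graph \<Rightarrow> bool) \<Rightarrow> bool" where
  "cliques_plus H l F \<longleftrightarrow> (\<exists>P. is_partition H l P \<and> F (induced H (P 0)) \<and>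
      (\<forall>i. 1 \<le> i \<and> i < l \<longrightarrow> is_clique H (P i)))"

definition l_EPS :: "nat \<Rightarrow> 'a graph \<Rightarrow> bool" where
  "l_EPS l H \<longleftrightarrow> 0 < l \<and>
    (\<forall>s. 1 \<le> s \<and> s \<le> l \<longrightarrow> (\<exists>P. is_partition H l P \<and>
        (\<forall>i<s. is_stable H (P i)) \<and> (\<forall>i. s \<le> i \<and> i < l \<longrightarrow> is_clique H (P i)))) \<and>
    cliques_plus H l (disj_union_fam (iota S2) complete_fam) \<and>
    cliques_plus H l (disj_union_fam (iota K2) complete_fam) \<and>
    cliques_plus H l (join_fam (iota S2) complete_fam) \<and>
    cliques_plus H l Cplus_fam \<and>
    \<not> (\<exists>P. is_partition H l P \<and>
        (is_clique H (P 0) \<or> (\<exists>m. graph_iso (induced H (P 0)) (complement (star m)))) \<and>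
        (\<forall>i. 1 \<le> i \<and> i < l \<longrightarrow> is_clique H (P i)))"

definition EPS_graph :: "'a graph \<Rightarrow> bool" where
  "EPS_graph H \<longleftrightarrow> (\<exists>l. l_EPS l H)"

end

theory Submission
  imports Defs "HOL-Library.Countable"
begin

(* For l \<ge> 5 let H_l have a stable set T_0, ..., T_l, a vertex W adjacent to T_0 and T_1, and for
   2 \<le> i \<le> l vertices X_i, A_i, B_i such that {T_i, X_i, A_i, B_i} is a clique, the A_i form a
   clique, the B_i form a clique, T_0 sees every A_i, T_1 sees every B_i, and W sees X_2, A_2, B_2.
   The partitions required by (EPS1) and (EPS2) are read off explicit colourings.
   For (EPS3), a clique meets {T_0, ..., T_l} in at most one vertex and the complement of a star in
   at most two, so a partition of H_l into l such parts meets it tightly: the co-star part contains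
   its isolated vertex T_j and exactly one further T_m, and every other part exactly one T_i. The
   neighbour of T_j whose only neighbours among the T_i are T_j and T_m then fits in no part.
   The H_l have strictly increasing numbers of vertices, hence are pairwise non-isomorphic. *)

section \<open>Induced subgraphs and the families of (EPS2)\<close>

lemma verts_induced [simp]: "verts (induced G Z) = Z \<inter> verts G"
  by (simp add: induced_def verts_def)

lemma adj_induced [simp]: "adj (induced G Z) x y \<longleftrightarrow> x \<in> Z \<and> y \<in> Z \<and> adj G x y"
  by (simp add: induced_def adj_def)

lemma induced_induced: "Y \<subseteq> Z \<Longrightarrow> induced (induced G Z) Y = induced G Y"
  unfolding induced_def verts_def adj_def by (simp add: fun_eq_iff; blast)

lemma iota_if_graph_iso:
  assumes "graph_iso G J"
  shows "iota J G"
proof -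
  obtain f where "bij_betw f (verts G) (verts J)"
    and "\<forall>x\<in>verts G. \<forall>y\<in>verts G. adj G x y \<longleftrightarrow> adj J (f x) (f y)"
    using assms unfolding graph_iso_def by blast
  then have "graph_iso G (induced J (verts J))"
    unfolding graph_iso_def by (intro exI[of _ f]) (auto dest: bij_betwE)
  then show ?thesis
    unfolding iota_def by blast
qed

lemma graph_iso_card_verts: "graph_iso G H \<Longrightarrow> card (verts G) = card (verts H)"
  unfolding graph_iso_def by (auto dest: bij_betw_same_card)

lemma verts_S2 [simp]: "verts S2 = UNIV" and adj_S2 [simp]: "\<not> adj S2 x y"
  by (simp_all add: S2_def verts_def adj_def)

lemma verts_K2 [simp]: "verts K2 = UNIV" and adj_K2 [simp]: "adj K2 x y \<longleftrightarrow> x \<noteq> y"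
  by (simp_all add: K2_def verts_def adj_def)

lemma bij_betw_pair_bool: "a \<noteq> b \<Longrightarrow> bij_betw (\<lambda>x. x = a) {a, b} (UNIV :: bool set)"
  by (auto simp: bij_betw_def inj_on_def)

lemma iota_S2_induced_pair:
  assumes "wf_graph G" "a \<in> verts G" "b \<in> verts G" "a \<noteq> b" "\<not> adj G a b"
  shows "iota S2 (induced G {a, b})"
proof (rule iota_if_graph_iso)
  have V: "verts (induced G {a, b}) = {a, b}" using assms(2,3) by auto
  have "\<not> adj G x y" if "x \<in> {a, b}" "y \<in> {a, b}" for x y
    using assms that unfolding wf_graph_def by blast
  then show "graph_iso (induced G {a, b}) S2"
    unfolding graph_iso_def V using bij_betw_pair_bool[OF assms(4)] by auto
qed

lemma iota_K2_induced_pair: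
  assumes "wf_graph G" "a \<in> verts G" "b \<in> verts G" "adj G a b"
  shows "iota K2 (induced G {a, b})"
proof (rule iota_if_graph_iso)
  have V: "verts (induced G {a, b}) = {a, b}" using assms(2,3) by auto
  have ab: "a \<noteq> b" "adj G b a" and loop: "\<And>x. \<not> adj G x x"
    using assms(1,4) unfolding wf_graph_def by blast+
  then show "graph_iso (induced G {a, b}) K2"
    unfolding graph_iso_def V using assms(4) bij_betw_pair_bool[OF ab(1)] by auto
qed

lemma complete_fam_induced: "is_clique G K \<Longrightarrow> complete_fam (induced G K)"
  unfolding complete_fam_def is_clique_def by auto

lemma disj_union_fam_induced:
  assumes "A \<union> B \<subseteq> verts G" "A \<inter> B = {}" "\<forall>a\<in>A. \<forall>b\<in>B. \<not> adj G a b"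
    and "F1 (induced G A)" "F2 (induced G B)"
  shows "disj_union_fam F1 F2 (induced G (A \<union> B))"
  unfolding disj_union_fam_def using assms
  by (intro exI[of _ A] exI[of _ B]) (auto simp: induced_induced)

lemma join_fam_induced:
  assumes "A \<union> B \<subseteq> verts G" "A \<inter> B = {}" "\<forall>a\<in>A. \<forall>b\<in>B. adj G a b"
    and "F1 (induced G A)" "F2 (induced G B)"
  shows "join_fam F1 F2 (induced G (A \<union> B))"
  unfolding join_fam_def using assms
  by (intro exI[of _ A] exI[of _ B]) (auto simp: induced_induced)

lemma Cplus_fam_induced:
  assumes "wf_graph G" "is_clique G K" "v \<in> verts G" "v \<notin> K"
    and "card {u \<in> K. adj G v u} \<le> 1"
  shows "Cplus_fam (induced G (insert v K))"
proof -
  have K: "K \<subseteq> verts G" using assms(2) by (simp add: is_clique_def)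
  have "verts (induced G (insert v K)) - {v} = K" using K assms(3,4) by auto
  then have "complete_fam (induced (induced G (insert v K)) (verts (induced G (insert v K)) - {v}))"
    using assms(2) by (simp add: induced_induced subset_insertI complete_fam_induced)
  moreover have "{u \<in> verts (induced G (insert v K)). adj (induced G (insert v K)) v u}
      = {u \<in> K. adj G v u}"
    using assms(1) K unfolding wf_graph_def by auto
  ultimately show ?thesis
    unfolding Cplus_fam_def degree_in_def using assms(3,5) by auto
qed

section \<open>Partitions meeting a stable set\<close>

lemma partition_part_subset: "is_partition G l P \<Longrightarrow> i < l \<Longrightarrow> P i \<subseteq> verts G"
  unfolding is_partition_def by blast

lemma card_eq_sum_partition_inter:
  assumes "is_partition G l P" "S \<subseteq> verts G" "finite S"
  shows "card S = (\<Sum>i<l. card (P i \<inter> S))"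
proof -
  have "(\<Union>i<l. P i) = verts G"
    using assms(1) by (simp add: is_partition_def)
  then have "S = (\<Union>i<l. P i \<inter> S)"
    using assms(2) by auto
  also have "card \<dots> = (\<Sum>i<l. card (P i \<inter> S))"
    using assms(1,3) unfolding is_partition_def by (intro card_UN_disjoint) blast+
  finally show ?thesis .
qed

lemma card_clique_inter_stable:
  assumes "is_clique G K" "is_stable G S" "finite S"
  shows "card (K \<inter> S) \<le> 1"
proof -
  have "\<forall>x\<in>K \<inter> S. \<forall>y\<in>K \<inter> S. x = y"
    using assms(1,2) unfolding is_clique_def is_stable_def by blast
  then show ?thesis
    using assms(3) by (simp add: card_le_Suc0_iff_eq)
qed

lemma verts_complement_star: "verts (complement (star m)) = {0..m}"
  by (simp add: complement_def star_def verts_def)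

lemma adj_complement_star:
  "adj (complement (star m)) a b \<longleftrightarrow> a \<in> {0..m} \<and> b \<in> {0..m} \<and> a \<noteq> b \<and> a \<noteq> 0 \<and> b \<noteq> 0"
  by (auto simp: complement_def star_def verts_def adj_def)

lemma costar_isolated_vertex:
  assumes "graph_iso (induced G Z) (complement (star m))"
  shows "\<exists>v\<in>Z \<inter> verts G. (\<forall>y\<in>Z \<inter> verts G. \<not> adj G v y) \<and> is_clique G (Z \<inter> verts G - {v})"
proof -
  obtain f where bij: "bij_betw f (Z \<inter> verts G) {0..m}" and iso_induced:
    "\<forall>x\<in>Z \<inter> verts G. \<forall>y\<in>Z \<inter> verts G. adj (induced G Z) x y \<longleftrightarrow> adj (complement (star m)) (f x) (f y)"
    using assms unfolding graph_iso_def verts_complement_star verts_induced by blast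
  have iso: "\<forall>x\<in>Z \<inter> verts G. \<forall>y\<in>Z \<inter> verts G. adj G x y \<longleftrightarrow> adj (complement (star m)) (f x) (f y)"
    using iso_induced by simp
  have "0 \<in> f ` (Z \<inter> verts G)"
    using bij_betw_imp_surj_on[OF bij] by simp
  then obtain v where v: "v \<in> Z \<inter> verts G" "f v = 0"
    by (rule imageE) auto
  have inj: "inj_on f (Z \<inter> verts G)"
    using bij by (rule bij_betw_imp_inj_on)
  have nonzero: "f x \<noteq> 0" if "x \<in> Z \<inter> verts G" "x \<noteq> v" for x
    using inj_onD[OF inj _ that(1) v(1)] v(2) that(2) by auto
  show ?thesis
  proof (intro bexI[OF _ v(1)] conjI ballI)
    show "\<not> adj G v y" if "y \<in> Z \<inter> verts G" for y
      using iso[rule_format, OF v(1) that] v(2) by (simp add: adj_complement_star)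
    show "is_clique G (Z \<inter> verts G - {v})"
      unfolding is_clique_def
    proof (intro conjI ballI impI)
      fix x y assume x: "x \<in> Z \<inter> verts G - {v}" and y: "y \<in> Z \<inter> verts G - {v}" and "x \<noteq> y"
      have x': "x \<in> Z \<inter> verts G" and y': "y \<in> Z \<inter> verts G"
        using x y by auto
      have "f x \<noteq> f y"
        using inj_onD[OF inj _ x' y'] \<open>x \<noteq> y\<close> by blast
      moreover have "f x \<in> {0..m}" "f y \<in> {0..m}"
        using bij_betwE[OF bij] x' y' by blast+
      moreover have "f x \<noteq> 0" "f y \<noteq> 0"
        using nonzero x' y' x y by auto
      ultimately have "adj (complement (star m)) (f x) (f y)"
        unfolding adj_complement_star by blast
      then show "adj G x y"
        using iso x' y' by blast
    qed blast
  qed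
qed

lemma partition_meets_stable_tightly:
  assumes part: "is_partition G l P" and "0 < l"
    and S: "is_stable G S" "finite S" "card S = l + 1"
    and P0: "card (P 0 \<inter> S) \<le> 2"
    and cliques: "\<And>i. 1 \<le> i \<Longrightarrow> i < l \<Longrightarrow> is_clique G (P i)"
    and "i < l"
  shows "card (P i \<inter> S) = (if i = 0 then 2 else 1)"
proof -
  define b :: "nat \<Rightarrow> nat" where "b i = (if i = 0 then 2 else 1)" for i
  have "(\<Sum>i<l. b i) = l + 1"
    using \<open>0 < l\<close> by (induction l) (auto simp: b_def)
  also have "\<dots> = (\<Sum>i<l. card (P i \<inter> S))"
    using card_eq_sum_partition_inter[OF part _ S(2)] S(1,3) by (simp add: is_stable_def)
  finally have sum_eq: "(\<Sum>i<l. card (P i \<inter> S)) = (\<Sum>i<l. b i)" ..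
  have le: "card (P k \<inter> S) \<le> b k" if "k < l" for k
  proof (cases "k = 0")
    case False
    then have "is_clique G (P k)"
      using cliques that by simp
    then show ?thesis
      using card_clique_inter_stable S(1,2) False by (simp add: b_def)
  qed (use P0 b_def in simp)
  show ?thesis
    using sum_mono_inv[OF sum_eq, of i] le \<open>i < l\<close> unfolding b_def by simp
qed

lemma costar_meets_stable:
  assumes "graph_iso (induced G Z) (complement (star m))" "Z \<subseteq> verts G"
    and "is_stable G S" "finite S"
  obtains v where "v \<in> Z" "\<forall>y\<in>Z. \<not> adj G v y" "card (Z \<inter> S) \<le> 2"
    "v \<notin> S \<Longrightarrow> card (Z \<inter> S) \<le> 1"
proof -
  have Z: "Z \<inter> verts G = Z"
    using assms(2) by blast
  obtain v where v: "v \<in> Z" "\<forall>y\<in>Z. \<not> adj G v y" and "is_clique G (Z - {v})"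
    using costar_isolated_vertex[OF assms(1)] unfolding Z by blast
  then have rest: "card ((Z - {v}) \<inter> S) \<le> 1"
    using card_clique_inter_stable assms(3,4) by blast
  have "card (Z \<inter> S) \<le> card (insert v ((Z - {v}) \<inter> S))"
    using assms(4) by (intro card_mono) auto
  also have "\<dots> \<le> Suc (card ((Z - {v}) \<inter> S))"
    using assms(4) by (simp add: card_insert_if)
  finally have "card (Z \<inter> S) \<le> Suc (card ((Z - {v}) \<inter> S))" .
  moreover have "Z \<inter> S = (Z - {v}) \<inter> S" if "v \<notin> S"
    using that by blast
  ultimately show ?thesis
    using that v rest by fastforce
qed

lemma private_neighbour_unplaceable:
  assumes part: "is_partition G l P" and "0 < l" and S: "is_stable G S"
    and v: "v \<in> P 0 \<inter> S" "\<forall>y\<in>P 0. \<not> adj G v y" and t: "t \<in> P 0"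
    and cliques: "\<And>k. 1 \<le> k \<Longrightarrow> k < l \<Longrightarrow> is_clique G (P k)"
    and meets: "\<And>k. 1 \<le> k \<Longrightarrow> k < l \<Longrightarrow> P k \<inter> S \<noteq> {}"
    and u: "u \<in> verts G" "adj G v u" "\<forall>r\<in>S. adj G u r \<longrightarrow> r = v \<or> r = t"
  shows False
proof -
  obtain k where k: "k < l" "u \<in> P k"
    using part u(1) unfolding is_partition_def by blast
  have "k \<noteq> 0"
  proof
    assume "k = 0"
    then show False
      using v(2) u(2) k(2) by blast
  qed
  then have "P k \<inter> S \<noteq> {}"
    using meets k(1) by simp
  then obtain r where r: "r \<in> P k \<inter> S"
    by blast
  have "u \<notin> S"
    using S v(1) u(2) unfolding is_stable_def by blast
  then have "adj G u r"
    using cliques[of k] \<open>k \<noteq> 0\<close> k r unfolding is_clique_def by auto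
  then have "r \<in> P 0"
    using u(3) r t v(1) by auto
  then show False
    using part \<open>k \<noteq> 0\<close> k(1) \<open>0 < l\<close> r unfolding is_partition_def by blast
qed

lemma no_costar_clique_partition:
  assumes "0 < l" and S: "is_stable G S" "finite S" "card S = l + 1"
    and separated: "\<And>s t. s \<in> S \<Longrightarrow> t \<in> S \<Longrightarrow> s \<noteq> t \<Longrightarrow>
      \<exists>u\<in>verts G. adj G s u \<and> (\<forall>r\<in>S. adj G u r \<longrightarrow> r = s \<or> r = t)"
  shows "\<not> (\<exists>P. is_partition G l P \<and>
    (is_clique G (P 0) \<or> (\<exists>m. graph_iso (induced G (P 0)) (complement (star m)))) \<and>
    (\<forall>i. 1 \<le> i \<and> i < l \<longrightarrow> is_clique G (P i)))"
proof
  assume "\<exists>P. is_partition G l P \<and>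
    (is_clique G (P 0) \<or> (\<exists>m. graph_iso (induced G (P 0)) (complement (star m)))) \<and>
    (\<forall>i. 1 \<le> i \<and> i < l \<longrightarrow> is_clique G (P i))"
  then obtain P where part: "is_partition G l P"
    and P0: "is_clique G (P 0) \<or> (\<exists>m. graph_iso (induced G (P 0)) (complement (star m)))"
    and cliques: "\<And>i. 1 \<le> i \<Longrightarrow> i < l \<Longrightarrow> is_clique G (P i)"
    by blast
  note tight = partition_meets_stable_tightly[OF part \<open>0 < l\<close> S _ cliques]
  from P0 show False
  proof
    assume "is_clique G (P 0)"
    then have "card (P 0 \<inter> S) \<le> 1"
      using card_clique_inter_stable S(1,2) by blast
    then show False
      using tight[of 0] \<open>0 < l\<close> by simp
  next
    assume "\<exists>m. graph_iso (induced G (P 0)) (complement (star m))"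
    then obtain v where v: "v \<in> P 0" and isolated: "\<forall>y\<in>P 0. \<not> adj G v y"
      and "card (P 0 \<inter> S) \<le> 2" and v_S: "v \<notin> S \<Longrightarrow> card (P 0 \<inter> S) \<le> 1"
      using costar_meets_stable partition_part_subset[OF part \<open>0 < l\<close>] S(1,2) by metis
    then have two: "card (P 0 \<inter> S) = 2" and meets: "\<And>k. 1 \<le> k \<Longrightarrow> k < l \<Longrightarrow> P k \<inter> S \<noteq> {}"
      using tight \<open>0 < l\<close> by fastforce+
    then have "v \<in> S"
      using v_S by linarith
    have "card (P 0 \<inter> S - {v}) = 1"
      using two \<open>v \<in> S\<close> v by simp
    then obtain t where t: "t \<in> P 0 \<inter> S" "t \<noteq> v"
      by (metis Diff_iff card_1_singletonE insertI1)
    then obtain u where "u \<in> verts G" "adj G v u" "\<forall>r\<in>S. adj G u r \<longrightarrow> r = v \<or> r = t"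
      using separated \<open>v \<in> S\<close> by blast
    then show False
      using private_neighbour_unplaceable[OF part \<open>0 < l\<close> S(1) _ isolated _ cliques meets]
        v \<open>v \<in> S\<close> t(1) by blast
  qed
qed

section \<open>Graphs on a countable vertex type\<close>

(* The theorem speaks about graphs on nat; graphs on a countable type are transported along to_nat. *)

definition graph_of :: "'a::countable set \<Rightarrow> ('a \<Rightarrow> 'a \<Rightarrow> bool) \<Rightarrow> nat graph" where
  "graph_of V R = (to_nat ` V, \<lambda>x y. \<exists>u\<in>V. \<exists>v\<in>V. x = to_nat u \<and> y = to_nat v \<and> R u v)"

lemma verts_graph_of: "verts (graph_of V R) = to_nat ` V"
  by (simp add: graph_of_def verts_def)

lemma adj_graph_of:
  "adj (graph_of V R) x y \<longleftrightarrow> (\<exists>u\<in>V. \<exists>v\<in>V. x = to_nat u \<and> y = to_nat v \<and> R u v)"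
  by (simp add: graph_of_def adj_def)

lemma to_nat_in_verts_graph_of [simp]: "to_nat u \<in> verts (graph_of V R) \<longleftrightarrow> u \<in> V"
  by (auto simp: verts_graph_of)

lemma adj_graph_of_to_nat [simp]:
  "adj (graph_of V R) (to_nat u) (to_nat v) \<longleftrightarrow> u \<in> V \<and> v \<in> V \<and> R u v"
  by (auto simp: adj_graph_of)

lemma wf_graph_of:
  assumes "finite V" "\<And>u. \<not> R u u" "\<And>u v. R u v \<Longrightarrow> R v u"
  shows "wf_graph (graph_of V R)"
  using assms unfolding wf_graph_def by (auto simp: verts_graph_of adj_graph_of)

lemma card_verts_graph_of: "card (verts (graph_of V R)) = card V"
  by (simp add: verts_graph_of card_image inj_on_def)

definition colour_class :: "'a::countable set \<Rightarrow> ('a \<Rightarrow> nat) \<Rightarrow> nat \<Rightarrow> nat set" where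
  "colour_class V p i = to_nat ` {u \<in> V. p u = i}"

lemma colour_class_Collect_eqI:
  assumes "\<And>u. Q u \<Longrightarrow> p u = i \<longleftrightarrow> u \<in> U"
  shows "colour_class {u. Q u} p i = to_nat ` (U \<inter> {u. Q u})"
  unfolding colour_class_def using assms by blast

lemma is_partition_colour_classes:
  assumes "\<And>u. u \<in> V \<Longrightarrow> p u < l"
  shows "is_partition (graph_of V R) l (colour_class V p)"
  unfolding is_partition_def colour_class_def verts_graph_of
proof (intro conjI allI impI)
  show "(\<Union>i<l. to_nat ` {u \<in> V. p u = i}) = to_nat ` V"
    using assms by auto
qed auto

lemma is_clique_colour_class:
  assumes "\<And>u v. u \<in> V \<Longrightarrow> v \<in> V \<Longrightarrow> p u = i \<Longrightarrow> p v = i \<Longrightarrow> u \<noteq> v \<Longrightarrow> R u v"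
  shows "is_clique (graph_of V R) (colour_class V p i)"
  unfolding is_clique_def colour_class_def using assms by auto

lemma is_stable_colour_class:
  assumes "\<And>u v. u \<in> V \<Longrightarrow> v \<in> V \<Longrightarrow> p u = i \<Longrightarrow> p v = i \<Longrightarrow> \<not> R u v"
  shows "is_stable (graph_of V R) (colour_class V p i)"
  unfolding is_stable_def colour_class_def using assms by auto

lemma stable_clique_partition_of_colouring:
  assumes "\<And>u. u \<in> V \<Longrightarrow> p u < l"
    and "\<And>u v. u \<in> V \<Longrightarrow> v \<in> V \<Longrightarrow> R u v \<Longrightarrow> p u = p v \<Longrightarrow> s \<le> p u"
    and "\<And>i u v. s \<le> i \<Longrightarrow> u \<in> V \<Longrightarrow> v \<in> V \<Longrightarrow> p u = i \<Longrightarrow> p v = i \<Longrightarrow> u \<noteq> v \<Longrightarrow> R u v"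
  shows "\<exists>P. is_partition (graph_of V R) l P \<and> (\<forall>i<s. is_stable (graph_of V R) (P i)) \<and>
    (\<forall>i. s \<le> i \<and> i < l \<longrightarrow> is_clique (graph_of V R) (P i))"
proof (intro exI[of _ "colour_class V p"] conjI allI impI)
  show "is_partition (graph_of V R) l (colour_class V p)"
    using assms(1) by (rule is_partition_colour_classes)
  show "is_stable (graph_of V R) (colour_class V p i)" if "i < s" for i
    using assms(2) that by (intro is_stable_colour_class) fastforce
  show "is_clique (graph_of V R) (colour_class V p i)" if "s \<le> i \<and> i < l" for i
    using that by (intro is_clique_colour_class assms(3)) auto
qed

lemma cliques_plus_of_colouring:
  assumes "\<And>u. u \<in> V \<Longrightarrow> p u < l"
    and "\<And>i u v. 1 \<le> i \<Longrightarrow> u \<in> V \<Longrightarrow> v \<in> V \<Longrightarrow> p u = i \<Longrightarrow> p v = i \<Longrightarrow> u \<noteq> v \<Longrightarrow> R u v"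
    and "F (induced (graph_of V R) (colour_class V p 0))"
  shows "cliques_plus (graph_of V R) l F"
  unfolding cliques_plus_def
proof (intro exI[of _ "colour_class V p"] conjI allI impI)
  show "is_partition (graph_of V R) l (colour_class V p)"
    using assms(1) by (rule is_partition_colour_classes)
  show "is_clique (graph_of V R) (colour_class V p i)" if "1 \<le> i \<and> i < l" for i
    using that by (intro is_clique_colour_class assms(2)) auto
qed (rule assms(3))

section \<open>The graphs H_l\<close>

datatype vtx = T nat | W | X nat | A nat | B nat

instance vtx :: countable
  by countable_datatype

fun vertex :: "nat \<Rightarrow> vtx \<Rightarrow> bool" where
  "vertex l (T i) \<longleftrightarrow> i \<le> l"
| "vertex l W \<longleftrightarrow> True"
| "vertex l (X i) \<longleftrightarrow> 2 \<le> i \<and> i \<le> l"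
| "vertex l (A i) \<longleftrightarrow> 2 \<le> i \<and> i \<le> l"
| "vertex l (B i) \<longleftrightarrow> 2 \<le> i \<and> i \<le> l"

fun arc :: "vtx \<Rightarrow> vtx \<Rightarrow> bool" where
  "arc (T i) (X j) \<longleftrightarrow> i = j"
| "arc (T i) (A j) \<longleftrightarrow> i = j \<or> i = 0"
| "arc (T i) (B j) \<longleftrightarrow> i = j \<or> i = 1"
| "arc (T i) W \<longleftrightarrow> i \<le> 1"
| "arc (X i) (A j) \<longleftrightarrow> i = j"
| "arc (X i) (B j) \<longleftrightarrow> i = j"
| "arc (X i) W \<longleftrightarrow> i = 2"
| "arc (A i) (A j) \<longleftrightarrow> i \<noteq> j"
| "arc (B i) (B j) \<longleftrightarrow> i \<noteq> j"
| "arc (A i) (B j) \<longleftrightarrow> i = j"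
| "arc (A i) W \<longleftrightarrow> i = 2"
| "arc (B i) W \<longleftrightarrow> i = 2"
| "arc _ _ \<longleftrightarrow> False"

definition edge :: "vtx \<Rightarrow> vtx \<Rightarrow> bool" where
  "edge u v \<longleftrightarrow> arc u v \<or> arc v u"

lemma edge_irrefl: "\<not> edge u u"
  by (cases u) (auto simp: edge_def)

lemma edge_sym: "edge u v \<Longrightarrow> edge v u"
  by (auto simp: edge_def)

lemma finite_vertices: "finite {u. vertex l u}"
proof (rule finite_subset)
  show "{u. vertex l u} \<subseteq> T ` {..l} \<union> {W} \<union> X ` {..l} \<union> A ` {..l} \<union> B ` {..l}"
  proof
    fix u assume "u \<in> {u. vertex l u}"
    then show "u \<in> T ` {..l} \<union> {W} \<union> X ` {..l} \<union> A ` {..l} \<union> B ` {..l}"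
      by (cases u) auto
  qed
qed simp

lemma vertices_psubset:
  assumes "l < l'"
  shows "{u. vertex l u} \<subset> {u. vertex l' u}"
proof -
  have "vertex l' u" if "vertex l u" for u
    using that assms by (cases u) auto
  moreover have "vertex l' (T l')" "\<not> vertex l (T l')"
    using assms by auto
  ultimately show ?thesis
    by blast
qed

definition Hgraph :: "nat \<Rightarrow> nat graph" where
  "Hgraph l = graph_of {u. vertex l u} edge"

lemma wf_Hgraph: "wf_graph (Hgraph l)"
  unfolding Hgraph_def using finite_vertices edge_irrefl edge_sym by (rule wf_graph_of)

lemma card_verts_Hgraph_strict_mono: "strict_mono (\<lambda>l. card (verts (Hgraph l)))"
  unfolding Hgraph_def card_verts_graph_of
  by (intro strict_monoI psubset_card_mono finite_vertices vertices_psubset)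

lemma to_nat_in_verts_Hgraph [simp]: "to_nat u \<in> verts (Hgraph l) \<longleftrightarrow> vertex l u"
  by (simp add: Hgraph_def)

lemma adj_Hgraph_to_nat [simp]:
  "adj (Hgraph l) (to_nat u) (to_nat v) \<longleftrightarrow> vertex l u \<and> vertex l v \<and> edge u v"
  by (simp add: Hgraph_def)

fun one_stable_colouring :: "vtx \<Rightarrow> nat" where
  "one_stable_colouring (T i) = (if i \<le> 2 then 0 else i - 1)"
| "one_stable_colouring W = 1"
| "one_stable_colouring (X i) = i - 1"
| "one_stable_colouring (A i) = i - 1"
| "one_stable_colouring (B i) = i - 1"

lemma one_stable_colouring_lt: "2 \<le> l \<Longrightarrow> vertex l u \<Longrightarrow> one_stable_colouring u < l"
  by (cases u) auto

lemma one_stable_colouring_edge: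
  "vertex l u \<Longrightarrow> vertex l v \<Longrightarrow> edge u v \<Longrightarrow> one_stable_colouring u = one_stable_colouring v \<Longrightarrow>
    1 \<le> one_stable_colouring u"
  apply (cases u; cases v)
  apply (simp_all add: edge_def)
  apply (auto split: if_splits)
  done

lemma one_stable_colouring_clique:
  "1 \<le> i \<Longrightarrow> vertex l u \<Longrightarrow> vertex l v \<Longrightarrow> one_stable_colouring u = i \<Longrightarrow>
    one_stable_colouring v = i \<Longrightarrow> u \<noteq> v \<Longrightarrow> edge u v"
  by (cases u; cases v) (auto simp: edge_def split: if_splits)

lemma one_stable_colouring_eq_0:
  "vertex l u \<Longrightarrow> one_stable_colouring u = 0 \<longleftrightarrow> u \<in> {T 0, T 1, T 2}"
  by (cases u) auto

fun two_cliques_colouring :: "nat \<Rightarrow> vtx \<Rightarrow> nat" where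
  "two_cliques_colouring s (T i) = (if i = 0 then s else if i = 1 then Suc s else 0)"
| "two_cliques_colouring s W = 0"
| "two_cliques_colouring s (X i) = 1"
| "two_cliques_colouring s (A i) = s"
| "two_cliques_colouring s (B i) = Suc s"

lemma two_cliques_colouring_lt: "s + 2 \<le> l \<Longrightarrow> vertex l u \<Longrightarrow> two_cliques_colouring s u < l"
  by (cases u) auto

lemma two_cliques_colouring_edge:
  "2 \<le> s \<Longrightarrow> vertex l u \<Longrightarrow> vertex l v \<Longrightarrow> edge u v \<Longrightarrow> two_cliques_colouring s u = two_cliques_colouring s v \<Longrightarrow>
    s \<le> two_cliques_colouring s u"
  apply (cases u; cases v)
  apply (simp_all add: edge_def)
  apply (auto split: if_splits)
  done

lemma two_cliques_colouring_clique:
  "2 \<le> s \<Longrightarrow> s \<le> i \<Longrightarrow> vertex l u \<Longrightarrow> vertex l v \<Longrightarrow> two_cliques_colouring s u = i \<Longrightarrow>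
    two_cliques_colouring s v = i \<Longrightarrow> u \<noteq> v \<Longrightarrow> edge u v"
  by (cases u; cases v) (auto simp: edge_def split: if_splits)

fun one_clique_colouring :: "nat \<Rightarrow> vtx \<Rightarrow> nat" where
  "one_clique_colouring l (T i) = 0"
| "one_clique_colouring l W = l - 1"
| "one_clique_colouring l (X i) =
    (if i = 2 then l - 1 else if i = l then 2 else if i = l - 1 then 1 else i)"
| "one_clique_colouring l (A i) = (if i = 2 then l - 1 else i - 2)"
| "one_clique_colouring l (B i) = (if i = 2 then l - 1 else if i = l then 1 else i - 1)"

lemma one_clique_colouring_lt: "5 \<le> l \<Longrightarrow> vertex l u \<Longrightarrow> one_clique_colouring l u < l"
  by (cases u) auto

lemma one_clique_colouring_edge:
  "5 \<le> l \<Longrightarrow> vertex l u \<Longrightarrow> vertex l v \<Longrightarrow> edge u v \<Longrightarrow> one_clique_colouring l u = one_clique_colouring l v \<Longrightarrow>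
    l - 1 \<le> one_clique_colouring l u"
  apply (cases u; cases v)
  apply (simp_all add: edge_def)
  apply (auto split: if_splits)
  done

lemma one_clique_colouring_clique:
  "5 \<le> l \<Longrightarrow> l - 1 \<le> i \<Longrightarrow> vertex l u \<Longrightarrow> vertex l v \<Longrightarrow> one_clique_colouring l u = i \<Longrightarrow>
    one_clique_colouring l v = i \<Longrightarrow> u \<noteq> v \<Longrightarrow> edge u v"
  by (cases u; cases v) (auto simp: edge_def split: if_splits)

fun proper_colouring :: "nat \<Rightarrow> vtx \<Rightarrow> nat" where
  "proper_colouring l (T i) = 0"
| "proper_colouring l W = 4"
| "proper_colouring l (X i) = (if i = l then 2 else if i = l - 1 then 1 else i + 1)"
| "proper_colouring l (A i) = i - 1"
| "proper_colouring l (B i) = (if i = l then 1 else i)"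

lemma proper_colouring_lt: "5 \<le> l \<Longrightarrow> vertex l u \<Longrightarrow> proper_colouring l u < l"
  by (cases u) auto

lemma proper_colouring_edge:
  "5 \<le> l \<Longrightarrow> vertex l u \<Longrightarrow> vertex l v \<Longrightarrow> edge u v \<Longrightarrow> proper_colouring l u = proper_colouring l v \<Longrightarrow>
    False"
  apply (cases u; cases v)
  apply (simp_all add: edge_def)
  apply (auto split: if_splits)
  done

fun K2_colouring :: "vtx \<Rightarrow> nat" where
  "K2_colouring (T i) = (if i = 0 then 1 else if i = 1 then 2 else if i \<le> 3 then 0 else i - 1)"
| "K2_colouring W = 2"
| "K2_colouring (X i) = (if i \<le> 3 then 0 else i - 1)"
| "K2_colouring (A i) = (if i = 2 then 1 else if i = 3 then 0 else i - 1)"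
| "K2_colouring (B i) = (if i = 2 then 2 else if i = 3 then 0 else i - 1)"

lemma K2_colouring_lt: "3 \<le> l \<Longrightarrow> vertex l u \<Longrightarrow> K2_colouring u < l"
  by (cases u) auto

lemma K2_colouring_clique:
  "1 \<le> i \<Longrightarrow> vertex l u \<Longrightarrow> vertex l v \<Longrightarrow> K2_colouring u = i \<Longrightarrow>
    K2_colouring v = i \<Longrightarrow> u \<noteq> v \<Longrightarrow> edge u v"
  by (cases u; cases v) (auto simp: edge_def split: if_splits)

lemma K2_colouring_eq_0:
  "3 \<le> l \<Longrightarrow> vertex l u \<Longrightarrow> K2_colouring u = 0 \<longleftrightarrow> u \<in> {T 2, X 2, T 3, X 3, A 3, B 3}"
  by (cases u) auto

fun join_colouring :: "vtx \<Rightarrow> nat" where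
  "join_colouring (T i) = (if i \<le> 1 then 0 else i - 1)"
| "join_colouring W = 0"
| "join_colouring (X i) = i - 1"
| "join_colouring (A i) = i - 1"
| "join_colouring (B i) = i - 1"

lemma join_colouring_lt: "1 \<le> l \<Longrightarrow> vertex l u \<Longrightarrow> join_colouring u < l"
  by (cases u) auto

lemma join_colouring_clique:
  "1 \<le> i \<Longrightarrow> vertex l u \<Longrightarrow> vertex l v \<Longrightarrow> join_colouring u = i \<Longrightarrow>
    join_colouring v = i \<Longrightarrow> u \<noteq> v \<Longrightarrow> edge u v"
  by (cases u; cases v) (auto simp: edge_def split: if_splits)

lemma join_colouring_eq_0:
  "1 \<le> l \<Longrightarrow> vertex l u \<Longrightarrow> join_colouring u = 0 \<longleftrightarrow> u \<in> {T 0, T 1, W}"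
  by (cases u) auto

lemma Hgraph_stable_clique_partition:
  assumes "5 \<le> l" "1 \<le> s" "s \<le> l"
  shows "\<exists>P. is_partition (Hgraph l) l P \<and> (\<forall>i<s. is_stable (Hgraph l) (P i)) \<and>
    (\<forall>i. s \<le> i \<and> i < l \<longrightarrow> is_clique (Hgraph l) (P i))"
proof -
  consider "s = 1" | "2 \<le> s" "s + 2 \<le> l" | "s = l - 1" | "s = l"
    using assms by linarith
  then show ?thesis
  proof cases
    case 1
    then show ?thesis
      unfolding Hgraph_def
      using assms one_stable_colouring_lt one_stable_colouring_edge one_stable_colouring_clique
      by (intro stable_clique_partition_of_colouring[of _ one_stable_colouring]) auto
  next
    case 2
    then show ?thesis
      unfolding Hgraph_def
      using two_cliques_colouring_lt two_cliques_colouring_edge two_cliques_colouring_clique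
      by (intro stable_clique_partition_of_colouring[of _ "two_cliques_colouring s"]) auto
  next
    case 3
    then show ?thesis
      unfolding Hgraph_def
      using assms one_clique_colouring_lt one_clique_colouring_edge one_clique_colouring_clique
      by (intro stable_clique_partition_of_colouring[of _ "one_clique_colouring l"]) auto
  next
    case 4
    then show ?thesis
      unfolding Hgraph_def using assms(1)
      by (intro stable_clique_partition_of_colouring[of _ "proper_colouring l"])
        (auto dest: proper_colouring_lt proper_colouring_edge)
  qed
qed

lemma Hgraph_S2_union_clique:
  assumes "2 \<le> l"
  shows "cliques_plus (Hgraph l) l (disj_union_fam (iota S2) complete_fam)"
proof -
  have "colour_class {u. vertex l u} one_stable_colouring 0 =
      {to_nat (T 0), to_nat (T 1)} \<union> {to_nat (T 2)}"
    using assms by (subst colour_class_Collect_eqI[OF one_stable_colouring_eq_0]) auto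
  moreover have "disj_union_fam (iota S2) complete_fam
      (induced (Hgraph l) ({to_nat (T 0), to_nat (T 1)} \<union> {to_nat (T 2)}))"
    using assms
    by (intro disj_union_fam_induced iota_S2_induced_pair complete_fam_induced wf_Hgraph)
      (auto simp: edge_def is_clique_def)
  ultimately show ?thesis
    using assms one_stable_colouring_lt one_stable_colouring_clique unfolding Hgraph_def
    by (intro cliques_plus_of_colouring[of _ one_stable_colouring]) auto
qed

lemma Hgraph_K2_union_clique:
  assumes "3 \<le> l"
  shows "cliques_plus (Hgraph l) l (disj_union_fam (iota K2) complete_fam)"
proof -
  have "colour_class {u. vertex l u} K2_colouring 0 =
      {to_nat (T 2), to_nat (X 2)} \<union> to_nat ` {T 3, X 3, A 3, B 3}"
    using assms by (subst colour_class_Collect_eqI[OF K2_colouring_eq_0]) auto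
  moreover have "disj_union_fam (iota K2) complete_fam
      (induced (Hgraph l) ({to_nat (T 2), to_nat (X 2)} \<union> to_nat ` {T 3, X 3, A 3, B 3}))"
    using assms
    by (intro disj_union_fam_induced iota_K2_induced_pair complete_fam_induced wf_Hgraph)
      (auto simp: edge_def is_clique_def)
  ultimately show ?thesis
    using assms K2_colouring_lt K2_colouring_clique unfolding Hgraph_def
    by (intro cliques_plus_of_colouring[of _ K2_colouring]) auto
qed

lemma Hgraph_S2_join_clique:
  assumes "2 \<le> l"
  shows "cliques_plus (Hgraph l) l (join_fam (iota S2) complete_fam)"
proof -
  have "colour_class {u. vertex l u} join_colouring 0 =
      {to_nat (T 0), to_nat (T 1)} \<union> {to_nat W}"
    using assms by (subst colour_class_Collect_eqI[OF join_colouring_eq_0]) auto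
  moreover have "join_fam (iota S2) complete_fam
      (induced (Hgraph l) ({to_nat (T 0), to_nat (T 1)} \<union> {to_nat W}))"
    using assms
    by (intro join_fam_induced iota_S2_induced_pair complete_fam_induced wf_Hgraph)
      (auto simp: edge_def is_clique_def)
  ultimately show ?thesis
    using assms join_colouring_lt join_colouring_clique unfolding Hgraph_def
    by (intro cliques_plus_of_colouring[of _ join_colouring]) auto
qed

lemma Hgraph_Cplus:
  assumes "2 \<le> l"
  shows "cliques_plus (Hgraph l) l Cplus_fam"
proof -
  have "colour_class {u. vertex l u} join_colouring 0 =
      insert (to_nat (T 0)) {to_nat (T 1), to_nat W}"
    using assms by (subst colour_class_Collect_eqI[OF join_colouring_eq_0]) auto
  moreover have "{u \<in> {to_nat (T 1), to_nat W}. adj (Hgraph l) (to_nat (T 0)) u} = {to_nat W}"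
    by (auto simp: edge_def)
  then have "Cplus_fam (induced (Hgraph l) (insert (to_nat (T 0)) {to_nat (T 1), to_nat W}))"
    using assms
    by (intro Cplus_fam_induced wf_Hgraph) (auto simp: edge_def is_clique_def)
  ultimately show ?thesis
    using assms join_colouring_lt join_colouring_clique unfolding Hgraph_def
    by (intro cliques_plus_of_colouring[of _ join_colouring]) auto
qed

lemma T_private_neighbour:
  assumes "j \<le> l" "m \<le> l" "j \<noteq> m"
  shows "\<exists>u. vertex l u \<and> edge (T j) u \<and> (\<forall>i. edge u (T i) \<longrightarrow> i = j \<or> i = m)"
proof -
  consider "2 \<le> j" | "j \<le> 1" "m \<le> 1" | "j = 0" "2 \<le> m" | "j = 1" "2 \<le> m"
    using assms by linarith
  then show ?thesis
  proof cases
    case 1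
    then show ?thesis
      using assms by (intro exI[of _ "X j"]) (auto simp: edge_def)
  next
    case 2
    then show ?thesis
      using assms by (intro exI[of _ W]) (auto simp: edge_def)
  next
    case 3
    then show ?thesis
      using assms by (intro exI[of _ "A m"]) (auto simp: edge_def)
  next
    case 4
    then show ?thesis
      using assms by (intro exI[of _ "B m"]) (auto simp: edge_def)
  qed
qed

lemma Hgraph_no_costar_clique_partition:
  assumes "0 < l"
  shows "\<not> (\<exists>P. is_partition (Hgraph l) l P \<and>
    (is_clique (Hgraph l) (P 0) \<or> (\<exists>m. graph_iso (induced (Hgraph l) (P 0)) (complement (star m)))) \<and>
    (\<forall>i. 1 \<le> i \<and> i < l \<longrightarrow> is_clique (Hgraph l) (P i)))"
proof (rule no_costar_clique_partition[where S = "(\<lambda>i. to_nat (T i)) ` {..l}"])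
  let ?S = "(\<lambda>i. to_nat (T i)) ` {..l}"
  show "is_stable (Hgraph l) ?S"
    by (auto simp: is_stable_def edge_def)
  show "card ?S = l + 1"
    by (simp add: card_image inj_on_def)
  show "\<exists>u\<in>verts (Hgraph l). adj (Hgraph l) s u \<and> (\<forall>r\<in>?S. adj (Hgraph l) u r \<longrightarrow> r = s \<or> r = t)"
    if "s \<in> ?S" "t \<in> ?S" and "s \<noteq> t" for s t
  proof -
    from that(1,2) obtain j m where j: "j \<le> l" "s = to_nat (T j)" and m: "m \<le> l" "t = to_nat (T m)"
      by auto
    with \<open>s \<noteq> t\<close> have "j \<noteq> m"
      by auto
    then obtain u where u: "vertex l u" "edge (T j) u"
      and only_j_m: "\<forall>i. edge u (T i) \<longrightarrow> i = j \<or> i = m"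
      using T_private_neighbour j(1) m(1) by blast
    have "adj (Hgraph l) s (to_nat u)"
      using u j by simp
    moreover have "r = s \<or> r = t" if "r \<in> ?S" "adj (Hgraph l) (to_nat u) r" for r
    proof -
      from that(1) obtain i where i: "r = to_nat (T i)"
        by blast
      with that(2) have "edge u (T i)"
        by simp
      with only_j_m have "i = j \<or> i = m"
        by blast
      then show ?thesis
        using i j(2) m(2) by blast
    qed
    ultimately show ?thesis
      using u by (intro bexI[of _ "to_nat u"]) auto
  qed
qed (use assms in auto)

lemma Hgraph_l_EPS:
  assumes "5 \<le> l"
  shows "l_EPS l (Hgraph l)"
  unfolding l_EPS_def
proof (intro conjI allI impI)
  show "\<exists>P. is_partition (Hgraph l) l P \<and> (\<forall>i<s. is_stable (Hgraph l) (P i)) \<and>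
      (\<forall>i. s \<le> i \<and> i < l \<longrightarrow> is_clique (Hgraph l) (P i))" if "1 \<le> s \<and> s \<le> l" for s
    using Hgraph_stable_clique_partition assms that by blast
  show "cliques_plus (Hgraph l) l (disj_union_fam (iota S2) complete_fam)"
    using assms by (intro Hgraph_S2_union_clique) simp
  show "cliques_plus (Hgraph l) l (disj_union_fam (iota K2) complete_fam)"
    using assms by (intro Hgraph_K2_union_clique) simp
  show "cliques_plus (Hgraph l) l (join_fam (iota S2) complete_fam)"
    using assms by (intro Hgraph_S2_join_clique) simp
  show "cliques_plus (Hgraph l) l Cplus_fam"
    using assms by (intro Hgraph_Cplus) simp
  show "\<not> (\<exists>P. is_partition (Hgraph l) l P \<and>
    (is_clique (Hgraph l) (P 0) \<or> (\<exists>m. graph_iso (induced (Hgraph l) (P 0)) (complement (star m)))) \<and>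
    (\<forall>i. 1 \<le> i \<and> i < l \<longrightarrow> is_clique (Hgraph l) (P i)))"
    using assms by (intro Hgraph_no_costar_clique_partition) simp
qed (use assms in simp)

theorem theorem3p12:
  shows "\<exists>\<G> :: nat graph set. infinite \<G> \<and>
           (\<forall>G\<in>\<G>. wf_graph G \<and> EPS_graph G) \<and>
           (\<forall>G\<in>\<G>. \<forall>H\<in>\<G>. G \<noteq> H \<longrightarrow> \<not> graph_iso G H)"
proof (intro exI[of _ "Hgraph ` {5..}"] conjI ballI impI)
  have card_eq_iff: "card (verts (Hgraph l)) = card (verts (Hgraph l')) \<longleftrightarrow> l = l'" for l l'
    using strict_mono_eq[OF card_verts_Hgraph_strict_mono] .
  then have "inj Hgraph"
    by (intro injI) (metis card_eq_iff)
  then show "infinite (Hgraph ` {5..})"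
    using infinite_Ici[of "5 :: nat"] by (simp add: finite_image_iff inj_on_subset)
  show "wf_graph G" if "G \<in> Hgraph ` {5..}" for G
    using that wf_Hgraph by auto
  show "EPS_graph G" if "G \<in> Hgraph ` {5..}" for G
    using that Hgraph_l_EPS unfolding EPS_graph_def by auto
  show "\<not> graph_iso G H" if "G \<in> Hgraph ` {5..}" "H \<in> Hgraph ` {5..}" "G \<noteq> H" for G H
  proof
    assume "graph_iso G H"
    then have "card (verts G) = card (verts H)"
      by (rule graph_iso_card_verts)
    with that show False
      using card_eq_iff by auto
  qed
qed

end
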